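(* Let $M^3$ be a closed orientable $3$-manifold and let $g_1=(f_1,f_2)\colon M^3\to\mathbb{R}^2$ be a stable map which has an immersion lift $\widetilde{g_1}=(f_1,f_2,f_3,f_4)\colon M^3\to\mathbb{R}^4$ (i.e. $\widetilde{g_1}$ is an immersion). Then the map \[G=(f_1,f_2,f_3,f_4,f_1,-f_2)\colon M^3\to\mathbb{R}^6=\mathbb{C}^3\] is a smooth immersion of $M^3$ into $\mathbb{C}^3$ whose set of complex tangents coincides with the singular set $S(g_1)$ of $g_1$.
   Context: $\mathbb{R}^6$ is identified with $\mathbb{C}^3$ via $(x_1,y_1,x_2,y_2,x_3,y_3)\mapsto(x_1+iy_1,x_2+iy_2,x_3+iy_3)$. For an immersion $F\colon M^3\to\mathbb{C}^3$, a point $x$ is a complex tangent if $dF_x(T_xM^3)$ contains a complex line. For a smooth map $g\colon M\to N$, the singular set is $S(g)=\{p\in M:\operatorname{rank} dg_p<\min(\dim M,\dim N)\}$. A smooth map $g\colon M^3\to\mathbb{R}^2$ is a stable map if (I) around every point $p$ there are local coordinates $(x,y,z)$ centred at $p$ and $(X,Y)$ centred at $g(p)$ in which $g$ has one of the forms $(x,y)$ (regular point), $(x,y^2+z^2)$ (definite fold), $(x,y^2-z^2)$ (indefinite fold), $(x,xy+y^3+z^2)$ (cusp); and (II) for each cusp point $p$, $g^{-1}(g(p))\cap S(g)=\{p\}$, and $g$ restricted to $S(g)$ minus the cusp points is an immersion with normal crossings. *)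

theory Defs
  imports "HOL-Analysis.Analysis"
begin

fun Ck :: "nat \<Rightarrow> 'a::real_normed_vector set \<Rightarrow> ('a \<Rightarrow> 'b::real_normed_vector) \<Rightarrow> bool" where
  "Ck 0 S f = continuous_on S f"
| "Ck (Suc k) S f = ((\<forall>x\<in>S. f differentiable (at x)) \<and>
      (\<forall>v. Ck k S (\<lambda>x. frechet_derivative f (at x) v)))"

definition smooth_on :: "'a::real_normed_vector set \<Rightarrow> ('a \<Rightarrow> 'b::real_normed_vector) \<Rightarrow> bool" where
  "smooth_on S f \<longleftrightarrow> open S \<and> (\<forall>k. Ck k S f)"

definition diffeo :: "'a::real_normed_vector set \<Rightarrow> 'a set \<Rightarrow> ('a \<Rightarrow> 'a) \<Rightarrow> bool" where
  "diffeo V W h \<longleftrightarrow> open V \<and> open W \<and> h ` V = W \<and> smooth_on V h \<and>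
     (\<exists>h'. smooth_on W h' \<and> (\<forall>x\<in>V. h' (h x) = x) \<and> (\<forall>y\<in>W. h (h' y) = y))"

definition local_param :: "'n::euclidean_space set \<Rightarrow> (real^3) set \<Rightarrow> (real^3 \<Rightarrow> 'n) \<Rightarrow> bool" where
  "local_param M U \<phi> \<longleftrightarrow> open U \<and> smooth_on U \<phi> \<and>
     (\<forall>u\<in>U. inj (frechet_derivative \<phi> (at u))) \<and>
     (\<exists>\<psi>. homeomorphism U (\<phi> ` U) \<phi> \<psi>) \<and>
     (\<exists>W. open W \<and> \<phi> ` U = M \<inter> W)"

definition manifold3 :: "'n::euclidean_space set \<Rightarrow> bool" where
  "manifold3 M \<longleftrightarrow> (\<forall>p\<in>M. \<exists>U \<phi>. local_param M U \<phi> \<and> p \<in> \<phi> ` U)"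

text \<open>Closed (compact, without boundary) 3-manifold.\<close>
definition closed_manifold3 :: "'n::euclidean_space set \<Rightarrow> bool" where
  "closed_manifold3 M \<longleftrightarrow> manifold3 M \<and> compact M"

definition orientable3 :: "'n::euclidean_space set \<Rightarrow> bool" where
  "orientable3 M \<longleftrightarrow> (\<exists>A. (\<forall>(U,\<phi>)\<in>A. local_param M U \<phi>) \<and>
     (\<forall>p\<in>M. \<exists>(U,\<phi>)\<in>A. p \<in> \<phi> ` U) \<and>
     (\<forall>(U1,\<phi>1)\<in>A. \<forall>(U2,\<phi>2)\<in>A. \<forall>u1\<in>U1. \<forall>u2\<in>U2. \<phi>1 u1 = \<phi>2 u2 \<longrightarrow>
        det (matrix (frechet_derivative (inv_into U2 \<phi>2 \<circ> \<phi>1) (at u1))) > 0))"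

definition smooth_map :: "'n::euclidean_space set \<Rightarrow> ('n \<Rightarrow> 'b::real_normed_vector) \<Rightarrow> bool" where
  "smooth_map M f \<longleftrightarrow> (\<forall>U \<phi>. local_param M U \<phi> \<longrightarrow> smooth_on U (f \<circ> \<phi>))"

definition immersion :: "'n::euclidean_space set \<Rightarrow> ('n \<Rightarrow> 'b::real_normed_vector) \<Rightarrow> bool" where
  "immersion M f \<longleftrightarrow> smooth_map M f \<and>
     (\<forall>U \<phi> u. local_param M U \<phi> \<and> u \<in> U \<longrightarrow> inj (frechet_derivative (f \<circ> \<phi>) (at u)))"

definition singular_set :: "'n::euclidean_space set \<Rightarrow> ('n \<Rightarrow> 'b::euclidean_space) \<Rightarrow> 'n set" where
  "singular_set M g = {p\<in>M. \<exists>U \<phi> u. local_param M U \<phi> \<and> u \<in> U \<and> \<phi> u = p \<and>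
       dim (range (frechet_derivative (g \<circ> \<phi>) (at u))) < min 3 DIM('b)}"

definition complex_tangents :: "'n::euclidean_space set \<Rightarrow> ('n \<Rightarrow> complex^3) \<Rightarrow> 'n set" where
  "complex_tangents M F = {p\<in>M. \<exists>U \<phi> u. local_param M U \<phi> \<and> u \<in> U \<and> \<phi> u = p \<and>
       (\<exists>v. v \<noteq> 0 \<and> (\<forall>c::complex. c *s v \<in> range (frechet_derivative (F \<circ> \<phi>) (at u))))}"

definition nf_regular :: "real^3 \<Rightarrow> real^2" where
  "nf_regular u = vector [u$1, u$2]"
definition nf_def_fold :: "real^3 \<Rightarrow> real^2" where
  "nf_def_fold u = vector [u$1, (u$2)^2 + (u$3)^2]"
definition nf_indef_fold :: "real^3 \<Rightarrow> real^2" where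
  "nf_indef_fold u = vector [u$1, (u$2)^2 - (u$3)^2]"
definition nf_cusp :: "real^3 \<Rightarrow> real^2" where
  "nf_cusp u = vector [u$1, u$1 * u$2 + (u$2)^3 + (u$3)^2]"

definition has_normal_form :: "'n::euclidean_space set \<Rightarrow> ('n \<Rightarrow> real^2) \<Rightarrow> 'n \<Rightarrow> (real^3 \<Rightarrow> real^2) \<Rightarrow> bool" where
  "has_normal_form M g p nf \<longleftrightarrow> (\<exists>U \<phi> V W h. local_param M U \<phi> \<and> 0 \<in> U \<and> \<phi> 0 = p \<and>
     diffeo V W h \<and> g p \<in> V \<and> h (g p) = 0 \<and>
     (\<forall>u\<in>U. g (\<phi> u) \<in> V \<and> h (g (\<phi> u)) = nf u))"

definition cusp_points :: "'n::euclidean_space set \<Rightarrow> ('n \<Rightarrow> real^2) \<Rightarrow> 'n set" where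
  "cusp_points M g = {p\<in>M. has_normal_form M g p nf_cusp}"

definition regular_curve_in :: "'n::euclidean_space set \<Rightarrow> 'n \<Rightarrow> real \<Rightarrow> (real \<Rightarrow> 'n) \<Rightarrow> bool" where
  "regular_curve_in S p e \<gamma> \<longleftrightarrow> e > 0 \<and> smooth_on {-e<..<e} \<gamma> \<and> \<gamma> ` {-e<..<e} \<subseteq> S \<and>
     \<gamma> 0 = p \<and> vector_derivative \<gamma> (at 0) \<noteq> 0"

text \<open>g restricted to S is an immersion with normal crossings (S is 1-dimensional).\<close>
definition immersion_normal_crossings :: "'n::euclidean_space set \<Rightarrow> ('n \<Rightarrow> real^2) \<Rightarrow> bool" where
  "immersion_normal_crossings S g \<longleftrightarrow>
     (\<forall>p e \<gamma>. regular_curve_in S p e \<gamma> \<longrightarrow> vector_derivative (g \<circ> \<gamma>) (at 0) \<noteq> 0) \<and>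
     (\<forall>q. finite {p\<in>S. g p = q} \<and> card {p\<in>S. g p = q} \<le> 2) \<and>
     (\<forall>p1 p2 e1 e2 \<gamma>1 \<gamma>2. p1 \<noteq> p2 \<and> g p1 = g p2 \<and>
        regular_curve_in S p1 e1 \<gamma>1 \<and> regular_curve_in S p2 e2 \<gamma>2 \<longrightarrow>
        (let a = vector_derivative (g \<circ> \<gamma>1) (at 0); b = vector_derivative (g \<circ> \<gamma>2) (at 0)
         in a$1 * b$2 - a$2 * b$1 \<noteq> 0))"

definition stable_map :: "'n::euclidean_space set \<Rightarrow> ('n \<Rightarrow> real^2) \<Rightarrow> bool" where
  "stable_map M g \<longleftrightarrow> smooth_map M g \<and>
     (\<forall>p\<in>M. has_normal_form M g p nf_regular \<or> has_normal_form M g p nf_def_fold \<or>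
             has_normal_form M g p nf_indef_fold \<or> has_normal_form M g p nf_cusp) \<and>
     (\<forall>p\<in>cusp_points M g. {q\<in>M. g q = g p} \<inter> singular_set M g = {p}) \<and>
     immersion_normal_crossings (singular_set M g - cusp_points M g) g"

end

theory Submission
  imports Defs
begin

text \<open>
  Write \<open>g = (f\<^sub>1, f\<^sub>2, f\<^sub>3, f\<^sub>4)\<close>. Then \<open>G = L \<circ> g\<close> and \<open>g\<^sub>1 = P \<circ> g\<close> for the injective real-linear map
  \<open>L x = (x\<^sub>1 + i x\<^sub>2, x\<^sub>3 + i x\<^sub>4, x\<^sub>1 - i x\<^sub>2)\<close> and the projection \<open>P x = (x\<^sub>1, x\<^sub>2)\<close>, so \<open>G\<close> is an
  immersion with \<open>dG = L \<circ> dg\<close>. Since the first and third coordinates of a point of \<open>L(\<real>\<^sup>4)\<close>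
  are complex conjugate, \<open>w\<close> and \<open>i w\<close> both lie in \<open>L(\<real>\<^sup>4)\<close> only if these coordinates vanish;
  hence \<open>L(V)\<close> contains a complex line iff \<open>V\<close> contains the plane \<open>ker P\<close>. For the
  3-dimensional space \<open>V = dg(T\<^sub>xM)\<close>, rank-nullity for \<open>P\<close> on \<open>V\<close> turns this into
  \<open>rank (P \<circ> dg) \<le> 1\<close>, i.e. \<open>x \<in> S(g\<^sub>1)\<close>.
\<close>

lemma dim_kernel_on_add_dim_image:
  fixes f :: "'a::euclidean_space \<Rightarrow> 'b::euclidean_space"
  assumes f: "linear f" and S: "subspace S"
  shows "dim {x\<in>S. f x = 0} + dim (f ` S) = dim S"
proof -
  define K where "K = {x\<in>S. f x = 0}"
  define C where "C = {y\<in>S. \<forall>x\<in>K. orthogonal x y}"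
  have "subspace K"
    unfolding K_def using S f by (auto simp: subspace_def linear_add linear_scale linear_0)
  have "subspace C"
    unfolding C_def using S by (auto simp: subspace_def orthogonal_clauses)
  have dim_C: "dim C + dim K = dim S"
    unfolding C_def by (rule dim_subspace_orthogonal_to_vectors[OF \<open>subspace K\<close> S]) (auto simp: K_def)
  have "f ` S \<subseteq> f ` C"
  proof
    fix v assume "v \<in> f ` S"
    then obtain x where "x \<in> S" "v = f x" by auto
    obtain y z where y: "y \<in> span K" and z: "\<And>w. w \<in> span K \<Longrightarrow> orthogonal z w" and "x = y + z"
      using orthogonal_subspace_decomp_exists[of K x] by blast
    have "y \<in> K" using y span_eq_iff[THEN iffD2, OF \<open>subspace K\<close>] by simp
    then have "z = x - y" "y \<in> S" "f y = 0" using \<open>x = y + z\<close> by (auto simp: K_def)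
    then have "z \<in> S" "f z = f x"
      using \<open>x \<in> S\<close> S linear_diff[OF f] by (simp_all add: subspace_diff)
    moreover have "z \<in> C"
      unfolding C_def using \<open>z \<in> S\<close> z span_base orthogonal_commute by blast
    ultimately show "v \<in> f ` C" using \<open>v = f x\<close> by (metis image_eqI)
  qed
  then have "f ` C = f ` S" by (auto simp: C_def)
  have "inj_on f C"
  proof (rule inj_onI)
    fix a b assume "a \<in> C" "b \<in> C" "f a = f b"
    then have "a - b \<in> C" "a - b \<in> K"
      using subspace_diff[OF \<open>subspace C\<close>] linear_diff[OF f] by (auto simp: K_def C_def)
    then have "orthogonal (a - b) (a - b)" unfolding C_def by blast
    then show "a = b" by (simp add: orthogonal_self)
  qed
  then have "dim (f ` C) = dim C"
    using \<open>subspace C\<close> by (intro dim_image_eq[OF f]) (metis span_eq_iff)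
  then show ?thesis using dim_C \<open>f ` C = f ` S\<close> by (simp add: K_def)
qed

lemma Ck_cong_open:
  assumes "open S" "Ck k S f" "\<And>x. x \<in> S \<Longrightarrow> f x = g x"
  shows "Ck k S g"
  using assms(2,3)
proof (induction k arbitrary: f g)
  case 0
  then show ?case using continuous_on_cong by fastforce
next
  case (Suc k)
  have "frechet_derivative f (at x) = frechet_derivative g (at x)" if "x \<in> S" for x
    using frechet_derivative_transform_within_open[OF _ \<open>open S\<close> that] Suc.prems that by auto
  then have "Ck k S (\<lambda>x. frechet_derivative g (at x) v)" for v
    using Suc.IH[of "\<lambda>x. frechet_derivative f (at x) v"] Suc.prems(1) by simp
  moreover have "g differentiable (at x)" if "x \<in> S" for x
    using has_derivative_transform_within_open[OF _ \<open>open S\<close> that] Suc.prems that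
    by (metis Ck.simps(2) differentiable_def)
  ultimately show ?case by simp
qed

lemma frechet_derivative_bounded_linear_compose:
  assumes L: "bounded_linear L" and f: "f differentiable (at x)"
  shows "frechet_derivative (\<lambda>y. L (f y)) (at x) = L \<circ> frechet_derivative f (at x)"
proof -
  have "((\<lambda>y. L (f y)) has_derivative (\<lambda>v. L (frechet_derivative f (at x) v))) (at x)"
    using bounded_linear.has_derivative[OF L] f frechet_derivative_works by blast
  then show ?thesis by (simp add: frechet_derivative_at[symmetric] o_def)
qed

lemma Ck_bounded_linear_compose:
  assumes L: "bounded_linear L" and "open S" "Ck k S f"
  shows "Ck k S (\<lambda>x. L (f x))"
  using assms(3)
proof (induction k arbitrary: f)
  case 0
  then show ?case using L by (auto intro: continuous_on_compose2 linear_continuous_on)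
next
  case (Suc k)
  have "Ck k S (\<lambda>x. frechet_derivative (\<lambda>y. L (f y)) (at x) v)" for v
  proof (rule Ck_cong_open[OF \<open>open S\<close>])
    show "Ck k S (\<lambda>x. L (frechet_derivative f (at x) v))" using Suc by auto
    show "L (frechet_derivative f (at x) v) = frechet_derivative (\<lambda>y. L (f y)) (at x) v"
      if "x \<in> S" for x
    proof -
      have "f differentiable (at x)" using Suc.prems that by simp
      then show ?thesis by (simp add: frechet_derivative_bounded_linear_compose[OF L])
    qed
  qed
  moreover have "(\<lambda>y. L (f y)) differentiable (at x)" if "x \<in> S" for x
  proof -
    have "f differentiable (at x)" using Suc.prems that by simp
    then show ?thesis by (rule differentiable_compose[OF bounded_linear_imp_differentiable[OF L]])
  qed
  ultimately show ?case by simp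
qed

lemma smooth_on_imp_differentiable: "smooth_on U f \<Longrightarrow> u \<in> U \<Longrightarrow> f differentiable (at u)"
  unfolding smooth_on_def using Ck.simps(2)[of 0 U f] by blast

lemma immersion_bounded_linear_compose:
  assumes "immersion M g" "bounded_linear L" "inj L"
  shows "immersion M (\<lambda>p. L (g p))"
  unfolding immersion_def smooth_map_def
proof (intro conjI allI impI)
  fix U \<phi> assume "local_param M U \<phi>"
  then have "smooth_on U (g \<circ> \<phi>)" using assms(1) by (simp add: immersion_def smooth_map_def)
  then show "smooth_on U ((\<lambda>p. L (g p)) \<circ> \<phi>)"
    using Ck_bounded_linear_compose[OF assms(2), of U _ "g \<circ> \<phi>"] by (simp add: smooth_on_def comp_def)
next
  fix U \<phi> u assume "local_param M U \<phi> \<and> u \<in> U"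
  then have "smooth_on U (g \<circ> \<phi>)" "u \<in> U" "inj (frechet_derivative (g \<circ> \<phi>) (at u))"
    using assms(1) by (auto simp: immersion_def smooth_map_def)
  moreover from this have "frechet_derivative ((\<lambda>p. L (g p)) \<circ> \<phi>) (at u)
      = L \<circ> frechet_derivative (g \<circ> \<phi>) (at u)"
    using frechet_derivative_bounded_linear_compose[OF assms(2) smooth_on_imp_differentiable]
    by (simp add: comp_def)
  ultimately show "inj (frechet_derivative ((\<lambda>p. L (g p)) \<circ> \<phi>) (at u))"
    using inj_compose[OF assms(3)] by simp
qed

definition embed_C3 :: "real^4 \<Rightarrow> complex^3" where
  "embed_C3 x = vector [Complex (x$1) (x$2), Complex (x$3) (x$4), Complex (x$1) (- x$2)]"

definition proj_R2 :: "real^4 \<Rightarrow> real^2" where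
  "proj_R2 x = vector [x$1, x$2]"

lemma vector_4_nth [simp]:
  "(vector [a, b, c, d] :: ('a::zero)^4) $ 1 = a"
  "(vector [a, b, c, d] :: ('a::zero)^4) $ 2 = b"
  "(vector [a, b, c, d] :: ('a::zero)^4) $ 3 = c"
  "(vector [a, b, c, d] :: ('a::zero)^4) $ 4 = d"
  by (simp_all add: vector_def)

lemma embed_C3_nth [simp]:
  "embed_C3 x $ 1 = Complex (x$1) (x$2)"
  "embed_C3 x $ 2 = Complex (x$3) (x$4)"
  "embed_C3 x $ 3 = Complex (x$1) (- x$2)"
  by (simp_all add: embed_C3_def)

lemma proj_R2_nth [simp]: "proj_R2 x $ 1 = x$1" "proj_R2 x $ 2 = x$2"
  by (simp_all add: proj_R2_def)

lemma proj_R2_eq_0_iff: "proj_R2 x = 0 \<longleftrightarrow> x$1 = 0 \<and> x$2 = 0"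
  by (auto simp: vec_eq_iff forall_2)

lemma linear_embed_C3: "linear embed_C3"
  by (rule linearI) (auto simp: vec_eq_iff forall_3 complex_eq_iff)

lemma linear_proj_R2: "linear proj_R2"
  by (rule linearI) (auto simp: vec_eq_iff forall_2)

lemma bounded_linear_embed_C3: "bounded_linear embed_C3"
  using linear_embed_C3 by (simp add: linear_conv_bounded_linear)

lemma bounded_linear_proj_R2: "bounded_linear proj_R2"
  using linear_proj_R2 by (simp add: linear_conv_bounded_linear)

lemma inj_embed_C3: "inj embed_C3"
proof (rule injI)
  fix x y assume "embed_C3 x = embed_C3 y"
  then have "embed_C3 x $ 1 = embed_C3 y $ 1" "embed_C3 x $ 2 = embed_C3 y $ 2" by auto
  then show "x = y" by (auto simp: vec_eq_iff forall_4)
qed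

lemma complex_line_in_embed_C3_image_iff:
  "(\<exists>w. w \<noteq> 0 \<and> (\<forall>c::complex. c *s w \<in> embed_C3 ` V)) \<longleftrightarrow> {x. proj_R2 x = 0} \<subseteq> V"
proof
  assume "\<exists>w. w \<noteq> 0 \<and> (\<forall>c::complex. c *s w \<in> embed_C3 ` V)"
  then obtain w where "w \<noteq> 0" and line: "\<And>c::complex. c *s w \<in> embed_C3 ` V" by blast
  obtain x where "x \<in> V" and x: "w = embed_C3 x" using line[of 1] by auto
  obtain y where y: "\<i> *s w = embed_C3 y" using line[of \<i>] by auto
  have "x$1 = 0" "x$2 = 0"
    using arg_cong[OF y, of "\<lambda>v. v$1"] arg_cong[OF y, of "\<lambda>v. v$3"]
    by (auto simp: x complex_eq_iff)
  define \<zeta> where "\<zeta> = Complex (x$3) (x$4)"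
  have w: "w = vector [0, \<zeta>, 0]"
    by (simp add: x \<zeta>_def vec_eq_iff forall_3 \<open>x$1 = 0\<close> \<open>x$2 = 0\<close> complex_eq_iff)
  with \<open>w \<noteq> 0\<close> have "\<zeta> \<noteq> 0" by (auto simp: vec_eq_iff forall_3)
  show "{x. proj_R2 x = 0} \<subseteq> V"
  proof
    fix z assume "z \<in> {x. proj_R2 x = 0}"
    then have "z$1 = 0" "z$2 = 0" by (simp_all add: proj_R2_eq_0_iff)
    then have "embed_C3 z = (Complex (z$3) (z$4) / \<zeta>) *s w"
      using \<open>\<zeta> \<noteq> 0\<close> by (simp add: w vec_eq_iff forall_3 Complex_eq_0)
    then obtain v where "v \<in> V" "embed_C3 v = embed_C3 z" using line by (metis imageE)
    then show "z \<in> V" using inj_embed_C3 by (auto dest: injD)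
  qed
next
  assume kernel: "{x. proj_R2 x = 0} \<subseteq> V"
  have "c *s vector [0, 1, 0] \<in> embed_C3 ` V" for c :: complex
  proof
    show "c *s vector [0, 1, 0] = embed_C3 (vector [0, 0, Re c, Im c])"
      by (simp add: vec_eq_iff forall_3 complex_eq_iff)
    show "vector [0, 0, Re c, Im c] \<in> V" using kernel by (auto simp: proj_R2_eq_0_iff)
  qed
  moreover have "vector [0, 1, 0] \<noteq> (0 :: complex^3)"
    by (metis vector_3(2) zero_index zero_neq_one)
  ultimately show "\<exists>w. w \<noteq> 0 \<and> (\<forall>c::complex. c *s w \<in> embed_C3 ` V)" by blast
qed

lemma dim_kernel_proj_R2: "dim {x. proj_R2 x = 0} = 2"
proof -
  have "range proj_R2 = UNIV"
  proof (rule surjI)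
    show "proj_R2 (vector [a$1, a$2, 0, 0]) = a" for a
      by (simp add: vec_eq_iff forall_2)
  qed
  then show ?thesis
    using dim_kernel_on_add_dim_image[OF linear_proj_R2 subspace_UNIV] by simp
qed

lemma kernel_proj_R2_subset_iff:
  assumes V: "subspace V" "dim V = 3"
  shows "{x. proj_R2 x = 0} \<subseteq> V \<longleftrightarrow> dim (proj_R2 ` V) < 2"
proof -
  define K where "K = {x. proj_R2 x = 0}"
  have "subspace K" unfolding K_def by (rule linear_subspace_kernel[OF linear_proj_R2])
  have "{x\<in>V. proj_R2 x = 0} = V \<inter> K" by (auto simp: K_def)
  then have rank: "dim (V \<inter> K) + dim (proj_R2 ` V) = 3"
    using dim_kernel_on_add_dim_image[OF linear_proj_R2 V(1)] V(2) by simp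
  have "dim K = 2" unfolding K_def by (rule dim_kernel_proj_R2)
  show ?thesis
    unfolding K_def[symmetric]
  proof
    assume "K \<subseteq> V"
    then have "V \<inter> K = K" by blast
    then show "dim (proj_R2 ` V) < 2" using rank \<open>dim K = 2\<close> by simp
  next
    assume "dim (proj_R2 ` V) < 2"
    then have "dim K \<le> dim (V \<inter> K)" using rank \<open>dim K = 2\<close> by simp
    then have "V \<inter> K = K"
      using subspace_dim_equal[OF subspace_inter[OF V(1) \<open>subspace K\<close>] \<open>subspace K\<close>] by blast
    then show "K \<subseteq> V" by blast
  qed
qed

lemma complex_line_in_range_iff_rank_le_1:
  fixes D :: "real^3 \<Rightarrow> real^4"
  assumes "linear D" "inj D"
  shows "(\<exists>w. w \<noteq> 0 \<and> (\<forall>c::complex. c *s w \<in> range (embed_C3 \<circ> D)))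
    \<longleftrightarrow> dim (range (proj_R2 \<circ> D)) < 2"
proof -
  have "dim (range D) = 3"
    using dim_image_eq[OF assms(1), of UNIV] assms(2) by simp
  then show ?thesis
    using kernel_proj_R2_subset_iff[OF linear_subspace_image[OF assms(1) subspace_UNIV]]
      complex_line_in_embed_C3_image_iff[of "range D"]
    by (simp add: image_comp)
qed

lemma complex_tangents_embed_C3_eq_singular_set:
  assumes "immersion M g"
  shows "complex_tangents M (\<lambda>p. embed_C3 (g p)) = singular_set M (\<lambda>p. proj_R2 (g p))"
proof -
  have "(\<exists>w. w \<noteq> 0 \<and>
        (\<forall>c::complex. c *s w \<in> range (frechet_derivative ((\<lambda>p. embed_C3 (g p)) \<circ> \<phi>) (at u))))
    \<longleftrightarrow> dim (range (frechet_derivative ((\<lambda>p. proj_R2 (g p)) \<circ> \<phi>) (at u))) < min 3 DIM(real^2)"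
    if "local_param M U \<phi>" "u \<in> U" for U \<phi> u
  proof -
    define D where "D = frechet_derivative (g \<circ> \<phi>) (at u)"
    have "smooth_on U (g \<circ> \<phi>)" using assms that(1) by (simp add: immersion_def smooth_map_def)
    then have differentiable: "(g \<circ> \<phi>) differentiable (at u)"
      using that(2) by (rule smooth_on_imp_differentiable)
    then have "linear D"
      unfolding D_def by (meson frechet_derivative_works has_derivative_linear)
    have "inj D" using assms that by (simp add: immersion_def D_def)
    have "frechet_derivative ((\<lambda>p. embed_C3 (g p)) \<circ> \<phi>) (at u) = embed_C3 \<circ> D"
      "frechet_derivative ((\<lambda>p. proj_R2 (g p)) \<circ> \<phi>) (at u) = proj_R2 \<circ> D"
      using frechet_derivative_bounded_linear_compose[OF bounded_linear_embed_C3 differentiable]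
        frechet_derivative_bounded_linear_compose[OF bounded_linear_proj_R2 differentiable]
      by (simp_all add: D_def comp_def)
    then show ?thesis
      using complex_line_in_range_iff_rank_le_1[OF \<open>linear D\<close> \<open>inj D\<close>] by simp
  qed
  then show ?thesis
    unfolding complex_tangents_def singular_set_def by (intro Collect_cong) (metis (no_types, lifting))
qed

theorem theorem3:
  fixes M :: "'n::euclidean_space set"
    and f1 f2 f3 f4 :: "'n \<Rightarrow> real"
  assumes "closed_manifold3 M"
    and "orientable3 M"
    and "stable_map M (\<lambda>p. vector [f1 p, f2 p] :: real^2)"
    and "immersion M (\<lambda>p. vector [f1 p, f2 p, f3 p, f4 p] :: real^4)"
  shows "immersion M (\<lambda>p. vector [Complex (f1 p) (f2 p), Complex (f3 p) (f4 p),
                                   Complex (f1 p) (- f2 p)] :: complex^3)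
    \<and> complex_tangents M (\<lambda>p. vector [Complex (f1 p) (f2 p), Complex (f3 p) (f4 p),
                                   Complex (f1 p) (- f2 p)] :: complex^3)
        = singular_set M (\<lambda>p. vector [f1 p, f2 p] :: real^2)"
proof -
  define g where "g = (\<lambda>p. vector [f1 p, f2 p, f3 p, f4 p] :: real^4)"
  have G: "(\<lambda>p. vector [Complex (f1 p) (f2 p), Complex (f3 p) (f4 p), Complex (f1 p) (- f2 p)])
      = (\<lambda>p. embed_C3 (g p))"
    by (auto simp: g_def vec_eq_iff forall_3)
  have g\<^sub>1: "(\<lambda>p. vector [f1 p, f2 p]) = (\<lambda>p. proj_R2 (g p))"
    by (auto simp: g_def vec_eq_iff forall_2)
  have "immersion M g" using assms(4) by (simp add: g_def)
  then show ?thesis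
    unfolding G g\<^sub>1
    using immersion_bounded_linear_compose[OF _ bounded_linear_embed_C3 inj_embed_C3]
      complex_tangents_embed_C3_eq_singular_set
    by blast
qed
end
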